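(* Let $n=2p$ with $p\ge 11$ prime, and let $G(\circ)$ be a group of order $n$ on $G$. Then $\delta_{\cong}(\circ)<\delta_{\not\cong}(\circ)$.
   Context: $G$ is a set of size $n$. $\mathrm{dist}(\circ,\ast)=|\{(a,b)\in G\times G:a\circ b\ne a\ast b\}|$. $\delta_{\cong}(\circ)=\min\{\mathrm{dist}(\circ,\ast): G(\ast)\cong G(\circ),\ G(\ast)\ne G(\circ)\}$ and $\delta_{\not\cong}(\circ)=\min\{\mathrm{dist}(\circ,\ast): G(\ast)\not\cong G(\circ)\}$ (minima over groups $G(\ast)$ defined on $G$). *)

theory Defs
  imports "HOL-Algebra.Algebra" "HOL-Computational_Algebra.Primes"
begin

text \<open>A binary operation f on the underlying set G, viewed as a structure (monoid record).
  Only its values on G x G matter. The unit is the (unique, if it exists) two-sided identity.\<close>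
definition grp :: "'a set \<Rightarrow> ('a \<Rightarrow> 'a \<Rightarrow> 'a) \<Rightarrow> 'a monoid" where
  "grp G f = \<lparr>carrier = G, monoid.mult = f,
              one = (THE e. e \<in> G \<and> (\<forall>x\<in>G. f e x = x \<and> f x e = x))\<rparr>"

definition group_op :: "'a set \<Rightarrow> ('a \<Rightarrow> 'a \<Rightarrow> 'a) \<Rightarrow> bool" where
  "group_op G f \<longleftrightarrow> group (grp G f)"

definition op_dist :: "'a set \<Rightarrow> ('a \<Rightarrow> 'a \<Rightarrow> 'a) \<Rightarrow> ('a \<Rightarrow> 'a \<Rightarrow> 'a) \<Rightarrow> nat" where
  "op_dist G f g = card {(a, b). a \<in> G \<and> b \<in> G \<and> f a b \<noteq> g a b}"

text \<open>delta_iso: minimum distance to a different group on G isomorphic to G(f).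
  Two group structures on G are equal iff the operations agree on G x G, i.e. dist > 0 means distinct.\<close>
definition delta_iso :: "'a set \<Rightarrow> ('a \<Rightarrow> 'a \<Rightarrow> 'a) \<Rightarrow> nat" where
  "delta_iso G f = Min {op_dist G f g | g. group_op G g \<and> grp G g \<cong> grp G f \<and> op_dist G f g \<noteq> 0}"

definition delta_noniso :: "'a set \<Rightarrow> ('a \<Rightarrow> 'a \<Rightarrow> 'a) \<Rightarrow> nat" where
  "delta_noniso G f = Min {op_dist G f g | g. group_op G g \<and> \<not> (grp G g \<cong> grp G f)}"

end

theory Submission
  imports Defs
begin

text \<open>Up to isomorphism there are two groups of order \<open>2 p\<close>, the cyclic and the dihedral one,
  both realised as the semidirect product of \<open>\<int>/p\<close> by \<open>\<int>/2\<close> acting by \<open>\<plusminus>1\<close>.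
  Relabelling a group by the transposition of its identity with another element gives a different
  but isomorphic group, and the two operations differ only on pairs meeting the two swapped
  elements or having product among them: at most \<open>6 n = 12 p\<close> pairs. Two non-isomorphic groups
  of order \<open>2 p\<close> are one abelian and one dihedral; each of the \<open>3 p (p - 1)\<close> non-commuting pairs
  of the dihedral group is a pair, or the swap of a pair, on which the operations differ, so
  their distance is at least \<open>3 p (p - 1) / 2\<close>, which exceeds \<open>12 p\<close> once \<open>p \<ge> 11\<close>.\<close>

lemma square_eq_one_mod_prime:
  fixes k p :: nat
  assumes "Factorial_Ring.prime p" "k < p" "(k * k) mod p = 1"
  shows "k = 1 \<or> k = p - 1"
proof -
  have "1 \<le> k"
    using assms(3) by (cases k) auto
  have "1 < p"
    using assms(1) prime_gt_1_nat by blast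
  then have "p dvd k * k - 1"
    using assms(3) \<open>1 \<le> k\<close> mod_eq_dvd_iff_nat[of 1 "k * k" p] by simp
  moreover have "k * k - 1 = (k - 1) * (k + 1)"
    using \<open>1 \<le> k\<close> by (simp add: algebra_simps)
  ultimately have "p dvd (k - 1) * (k + 1)"
    by simp
  then have "p dvd k - 1 \<or> p dvd k + 1"
    using assms(1) prime_dvd_mult_iff by blast
  then show ?thesis
  proof
    assume "p dvd k - 1"
    then have "k - 1 = 0"
      using assms(2) dvd_imp_le[of p "k - 1"] by force
    then show ?thesis
      using \<open>1 \<le> k\<close> by simp
  next
    assume "p dvd k + 1"
    then have "p \<le> k + 1"
      by (simp add: dvd_imp_le)
    then show ?thesis
      using assms(2) by arith
  qed
qed

lemma square_mod_eq_one:
  fixes e p :: nat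
  assumes "0 < p" "e = 1 \<or> e = p - 1"
  shows "(e * e) mod p = 1 mod p"
  using assms(2)
proof
  assume e: "e = p - 1"
  show ?thesis
  proof (cases "p = 1")
    case False
    then have "(p - 1) * (p - 1) = 1 + p * (p - 2)"
      using assms(1) by (cases p) (auto simp: algebra_simps)
    then show ?thesis
      by (simp only: e mod_mult_self2)
  qed (simp add: e)
qed simp

lemma mod_eq_double_offset_zero:
  fixes x y :: nat and z w :: int
  assumes "Factorial_Ring.prime p" "2 < p" and "x mod p = y mod p"
    and "int x - int y = int p * z + 2 * w" and "\<bar>w\<bar> < int p"
  shows "w = 0"
proof -
  have "int p dvd int p * z + 2 * w"
    using assms(3,4) by (metis mod_eq_dvd_iff of_nat_mod)
  then have "int p dvd 2 * w"
    by (simp add: dvd_add_right_iff)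
  moreover have "\<not> int p dvd 2"
    using assms(2) by (auto dest: zdvd_imp_le)
  ultimately have "int p dvd w"
    using assms(1) prime_dvd_mult_iff[of "int p"] by simp
  then show ?thesis
    using assms(5) by (metis dvd_imp_le_int abs_of_nat not_le)
qed

lemma grp_carrier [simp]: "carrier (grp G f) = G"
  by (simp add: grp_def)

lemma grp_mult [simp]: "monoid.mult (grp G f) = f"
  by (simp add: grp_def)

lemma grp_one_eqI:
  assumes "u \<in> G" and "\<And>x. x \<in> G \<Longrightarrow> f u x = x \<and> f x u = x"
  shows "one (grp G f) = u"
proof -
  have "(THE e. e \<in> G \<and> (\<forall>x\<in>G. f e x = x \<and> f x e = x)) = u"
    by (rule the_equality) (use assms in metis)+
  then show ?thesis
    by (simp add: grp_def)
qed

lemma group_grpI: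
  assumes closed: "\<And>x y. x \<in> G \<Longrightarrow> y \<in> G \<Longrightarrow> f x y \<in> G"
    and assoc: "\<And>x y z. x \<in> G \<Longrightarrow> y \<in> G \<Longrightarrow> z \<in> G \<Longrightarrow> f (f x y) z = f x (f y z)"
    and unit: "u \<in> G" "\<And>x. x \<in> G \<Longrightarrow> f u x = x \<and> f x u = x"
    and left_inverse: "\<And>x. x \<in> G \<Longrightarrow> \<exists>y\<in>G. f y x = u"
  shows "group (grp G f)"
  by (rule groupI) (simp_all add: grp_one_eqI[OF unit] closed assoc unit left_inverse)

lemma grp_closed:
  assumes "group (grp G f)" "x \<in> G" "y \<in> G"
  shows "f x y \<in> G"
  using monoid.m_closed[OF group.is_monoid[OF assms(1)]] assms(2,3) by simp

lemma group_grp_iso_transfer: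
  assumes group: "group (grp I M)" and iso: "\<psi> \<in> iso (grp I M) (grp G g)"
  shows "group (grp G g)"
proof -
  interpret I: group "grp I M" by (fact group)
  have G: "G = \<psi> ` I"
    using iso by (auto simp: iso_def bij_betw_def)
  have hom: "g (\<psi> a) (\<psi> b) = \<psi> (M a b)" if "a \<in> I" "b \<in> I" for a b
    using iso that by (auto simp: iso_def hom_def)
  have closed: "M a b \<in> I" if "a \<in> I" "b \<in> I" for a b
    using I.m_closed that by simp
  show ?thesis
  proof (rule group_grpI[where u = "\<psi> (one (grp I M))"], unfold G)
    fix x assume "x \<in> \<psi> ` I"
    then obtain a where a: "a \<in> I" "x = \<psi> a"
      by blast
    then obtain b where "b \<in> I" "M b a = one (grp I M)"
      using I.l_inv_ex[of a] by auto
    with a show "\<exists>y\<in>\<psi> ` I. g y x = \<psi> (one (grp I M))"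
      using hom[of b a] by (intro bexI[of _ "\<psi> b"]) auto
  qed (use I.m_assoc I.one_closed I.l_one I.r_one in \<open>auto simp: hom closed\<close>)
qed

definition transfer_op :: "('b \<Rightarrow> 'a) \<Rightarrow> 'b set \<Rightarrow> ('b \<Rightarrow> 'b \<Rightarrow> 'b) \<Rightarrow> 'a \<Rightarrow> 'a \<Rightarrow> 'a" where
  "transfer_op \<psi> I M x y = \<psi> (M (inv_into I \<psi> x) (inv_into I \<psi> y))"

lemma iso_transfer_op:
  assumes bij: "bij_betw \<psi> I G" and closed: "\<And>a b. a \<in> I \<Longrightarrow> b \<in> I \<Longrightarrow> M a b \<in> I"
  shows "\<psi> \<in> iso (grp I M) (grp G (transfer_op \<psi> I M))"
proof (rule isoI)
  have "inj_on \<psi> I"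
    using bij by (simp add: bij_betw_def)
  then show "\<psi> \<in> hom (grp I M) (grp G (transfer_op \<psi> I M))"
    using bij_betwE[OF bij] by (auto simp: hom_def transfer_op_def)
qed (simp add: bij)

lemma transfer_op_involution:
  assumes "\<And>x. \<sigma> (\<sigma> x) = x" and "\<And>x. x \<in> G \<Longrightarrow> \<sigma> x \<in> G"
  shows "bij_betw \<sigma> G G"
    and "x \<in> G \<Longrightarrow> y \<in> G \<Longrightarrow> transfer_op \<sigma> G f x y = \<sigma> (f (\<sigma> x) (\<sigma> y))"
proof -
  show bij: "bij_betw \<sigma> G G"
    by (rule bij_betw_byWitness[where f' = \<sigma>]) (use assms in auto)
  have "inv_into G \<sigma> x = \<sigma> x" if "x \<in> G" for x
    by (rule inv_into_f_eq[OF bij_betw_imp_inj_on[OF bij]]) (use assms that in auto)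
  then show "x \<in> G \<Longrightarrow> y \<in> G \<Longrightarrow> transfer_op \<sigma> G f x y = \<sigma> (f (\<sigma> x) (\<sigma> y))"
    by (simp add: transfer_op_def)
qed

text \<open>\<open>(i, j)\<close> stands for \<open>r\<^sup>i s\<^sup>j\<close> in the semidirect product of \<open>\<int>/p\<close> by \<open>\<int>/2\<close> in which \<open>s\<close>
  acts by multiplication with \<open>e\<close>: \<open>e = 1\<close> gives the cyclic group of order \<open>2 p\<close>,
  \<open>e = p - 1\<close> the dihedral group.\<close>
fun sdp_mult :: "nat \<Rightarrow> nat \<Rightarrow> nat \<times> nat \<Rightarrow> nat \<times> nat \<Rightarrow> nat \<times> nat" where
  "sdp_mult p e (i, j) (k, l) = ((i + (if j = 0 then k else e * k)) mod p, (j + l) mod 2)"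

definition sdp_carrier :: "nat \<Rightarrow> (nat \<times> nat) set" where
  "sdp_carrier p = {..<p} \<times> {0, 1}"

lemma sdp_carrier_iff: "(i, j) \<in> sdp_carrier p \<longleftrightarrow> i < p \<and> (j = 0 \<or> j = 1)"
  by (auto simp: sdp_carrier_def)

lemma card_sdp_carrier: "card (sdp_carrier p) = 2 * p"
  by (simp add: sdp_carrier_def card_cartesian_product)

lemma sdp_mult_closed: "0 < p \<Longrightarrow> a \<in> sdp_carrier p \<Longrightarrow> b \<in> sdp_carrier p \<Longrightarrow> sdp_mult p e a b \<in> sdp_carrier p"
  by (cases a, cases b) (auto simp: sdp_carrier_def)

lemma sdp_mult_assoc:
  assumes e: "(e * e) mod p = 1 mod p"
    and "a \<in> sdp_carrier p" "b \<in> sdp_carrier p" "c \<in> sdp_carrier p"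
  shows "sdp_mult p e (sdp_mult p e a b) c = sdp_mult p e a (sdp_mult p e b c)"
proof -
  obtain i j k l u v where abc: "a = (i, j)" "b = (k, l)" "c = (u, v)" "j \<in> {0, 1}" "l \<in> {0, 1}" "v \<in> {0, 1}"
    using assms(2-4) by (cases a, cases b, cases c) (auto simp: sdp_carrier_iff)
  have twist: "(x + e * (y mod p)) mod p = (x + e * y) mod p" for x y
    by (subst mod_add_right_eq[symmetric]) (simp add: mod_mult_right_eq mod_add_right_eq)
  have untwist: "(x + e * (e * y)) mod p = (x + y) mod p" for x y
  proof -
    have "(e * (e * y)) mod p = ((e * e) mod p * y) mod p"
      by (simp add: mod_mult_left_eq mult.assoc)
    also have "\<dots> = y mod p"
      by (simp add: e mod_mult_left_eq)
    finally show ?thesis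
      by (metis mod_add_right_eq)
  qed
  consider "j = 0" | "j = 1" "l = 0" | "j = 1" "l = 1"
    using abc by auto
  then show ?thesis
  proof cases
    case 1
    then show ?thesis
      using abc by (auto simp: mod_add_left_eq mod_add_right_eq add.assoc)
  next
    case 2
    then show ?thesis
      using abc by (auto simp: twist mod_add_left_eq add.assoc distrib_left)
  next
    case 3
    then show ?thesis
      using abc by (auto simp: twist untwist mod_add_left_eq distrib_left add.assoc[symmetric])
  qed
qed

lemma group_sdp:
  assumes p: "0 < p" and e: "(e * e) mod p = 1 mod p"
  shows "group (grp (sdp_carrier p) (sdp_mult p e))"
proof (rule group_grpI[where u = "(0, 0)"])
  show "(0, 0) \<in> sdp_carrier p"
    using p by (simp add: sdp_carrier_def)
  fix x assume x: "x \<in> sdp_carrier p"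
  then obtain i j where ij: "x = (i, j)" "i < p" "j = 0 \<or> j = 1"
    by (cases x) (auto simp: sdp_carrier_def)
  show "sdp_mult p e (0, 0) x = x \<and> sdp_mult p e x (0, 0) = x"
    using ij by auto
  define t where "t = (if j = 0 then i else e * i)"
  have "((p - t mod p) mod p + t) mod p = (p - t mod p + t mod p) mod p"
    by (simp add: mod_add_left_eq mod_add_right_eq)
  also have "\<dots> = 0"
    using p by simp
  finally have "sdp_mult p e ((p - t mod p) mod p, j) x = (0, 0)"
    using ij by (auto simp: t_def)
  moreover have "((p - t mod p) mod p, j) \<in> sdp_carrier p"
    using ij p by (simp add: sdp_carrier_def)
  ultimately show "\<exists>y\<in>sdp_carrier p. sdp_mult p e y x = (0, 0)"
    by blast
qed (use p sdp_mult_closed sdp_mult_assoc[OF e] in blast)+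

lemma op_dist_commute: "op_dist G f g = op_dist G g f"
  unfolding op_dist_def by (simp add: eq_commute)

lemma op_dist_gt_0I:
  assumes "finite G" "a \<in> G" "b \<in> G" "f a b \<noteq> g a b"
  shows "0 < op_dist G f g"
  unfolding op_dist_def using assms
  by (intro card_gt_0_iff[THEN iffD2]) (auto intro: finite_subset[of _ "G \<times> G"])

definition noncommuting_pairs :: "'a set \<Rightarrow> ('a \<Rightarrow> 'a \<Rightarrow> 'a) \<Rightarrow> ('a \<times> 'a) set" where
  "noncommuting_pairs G f = {(x, y). x \<in> G \<and> y \<in> G \<and> f x y \<noteq> f y x}"

lemma card_noncommuting_pairs_le:
  assumes "finite G"
  shows "card (noncommuting_pairs G g) \<le> card (noncommuting_pairs G f) + 2 * op_dist G f g"
proof -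
  define D where "D = {(x, y). x \<in> G \<and> y \<in> G \<and> f x y \<noteq> g x y}"
  have "finite (noncommuting_pairs G f)" "finite D"
    using assms by (auto intro: finite_subset[of _ "G \<times> G"] simp: noncommuting_pairs_def D_def)
  moreover have "noncommuting_pairs G g \<subseteq> noncommuting_pairs G f \<union> D \<union> prod.swap ` D"
    by (auto simp: noncommuting_pairs_def D_def image_iff)
  ultimately have "card (noncommuting_pairs G g) \<le> card (noncommuting_pairs G f \<union> D \<union> prod.swap ` D)"
    by (intro card_mono) auto
  also have "\<dots> \<le> card (noncommuting_pairs G f) + card D + card (prod.swap ` D)"
    by (meson add_le_mono card_Un_le order_trans order_refl)
  also have "\<dots> \<le> card (noncommuting_pairs G f) + 2 * card D"
    using card_image_le[OF \<open>finite D\<close>, of prod.swap] by simp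
  finally show ?thesis
    by (simp add: op_dist_def D_def)
qed

lemma card_noncommuting_pairs_iso:
  assumes group: "group (grp I M)" and "grp I M \<cong> grp G g"
  shows "card (noncommuting_pairs G g) = card (noncommuting_pairs I M)"
proof -
  obtain \<psi> where "\<psi> \<in> iso (grp I M) (grp G g)"
    using assms(2) by (auto simp: is_iso_def)
  then have bij: "bij_betw \<psi> I G"
    and hom: "\<And>a b. a \<in> I \<Longrightarrow> b \<in> I \<Longrightarrow> \<psi> (M a b) = g (\<psi> a) (\<psi> b)"
    by (auto simp: iso_def hom_def)
  have commute_iff: "g (\<psi> a) (\<psi> b) = g (\<psi> b) (\<psi> a) \<longleftrightarrow> M a b = M b a" if "a \<in> I" "b \<in> I" for a b
    using hom[of a b] hom[of b a] that grp_closed[OF group] bij_betw_imp_inj_on[OF bij]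
    by (metis inj_on_eq_iff)
  have "map_prod \<psi> \<psi> ` noncommuting_pairs I M = noncommuting_pairs G g"
  proof
    show "map_prod \<psi> \<psi> ` noncommuting_pairs I M \<subseteq> noncommuting_pairs G g"
      using commute_iff bij_betwE[OF bij] by (auto simp: noncommuting_pairs_def)
  next
    show "noncommuting_pairs G g \<subseteq> map_prod \<psi> \<psi> ` noncommuting_pairs I M"
    proof
      fix z assume "z \<in> noncommuting_pairs G g"
      then obtain x y where z: "z = (x, y)" "x \<in> G" "y \<in> G" "g x y \<noteq> g y x"
        by (auto simp: noncommuting_pairs_def)
      then obtain a b where "a \<in> I" "b \<in> I" "x = \<psi> a" "y = \<psi> b"
        using bij by (auto simp: bij_betw_def)
      with z commute_iff show "z \<in> map_prod \<psi> \<psi> ` noncommuting_pairs I M"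
        by (auto simp: noncommuting_pairs_def)
    qed
  qed
  moreover have "inj_on (map_prod \<psi> \<psi>) (noncommuting_pairs I M)"
    using map_prod_inj_on[OF bij_betw_imp_inj_on[OF bij] bij_betw_imp_inj_on[OF bij]]
    by (rule inj_on_subset) (auto simp: noncommuting_pairs_def)
  ultimately show ?thesis
    using card_image by metis
qed

lemma noncommuting_pairs_sdp_one: "noncommuting_pairs (sdp_carrier p) (sdp_mult p 1) = {}"
  by (auto simp: noncommuting_pairs_def sdp_carrier_def add.commute)

lemma dihedral_rotation_reflection_noncommute:
  assumes "Factorial_Ring.prime p" "2 < p" "0 < i" "i < p"
  shows "sdp_mult p (p - 1) (i, 0) (k, 1) \<noteq> sdp_mult p (p - 1) (k, 1) (i, 0)"
proof
  assume "sdp_mult p (p - 1) (i, 0) (k, 1) = sdp_mult p (p - 1) (k, 1) (i, 0)"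
  then have "(i + k) mod p = (k + (p - 1) * i) mod p"
    by simp
  moreover have "int (i + k) - int (k + (p - 1) * i) = int p * (- int i) + 2 * int i"
    using assms(2) by (simp only: of_nat_add of_nat_mult of_nat_diff) (simp add: algebra_simps)
  ultimately have "int i = 0"
    by (rule mod_eq_double_offset_zero[OF assms(1,2)]) (use assms(4) in simp)
  with assms(3) show False
    by simp
qed

lemma dihedral_reflections_noncommute:
  assumes "Factorial_Ring.prime p" "2 < p" "i \<noteq> k" "i < p" "k < p"
  shows "sdp_mult p (p - 1) (i, 1) (k, 1) \<noteq> sdp_mult p (p - 1) (k, 1) (i, 1)"
proof
  assume "sdp_mult p (p - 1) (i, 1) (k, 1) = sdp_mult p (p - 1) (k, 1) (i, 1)"
  then have "(i + (p - 1) * k) mod p = (k + (p - 1) * i) mod p"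
    by simp
  moreover have "int (i + (p - 1) * k) - int (k + (p - 1) * i) = int p * (int k - int i) + 2 * (int i - int k)"
    using assms(2) by (simp only: of_nat_add of_nat_mult of_nat_diff) (simp add: algebra_simps)
  ultimately have "int i - int k = 0"
    by (rule mod_eq_double_offset_zero[OF assms(1,2)]) (use assms(4,5) in linarith)
  with assms(3) show False
    by simp
qed

lemma card_noncommuting_pairs_dihedral:
  assumes prime: "Factorial_Ring.prime p" and p: "2 < p"
  shows "3 * p * (p - 1) \<le> card (noncommuting_pairs (sdp_carrier p) (sdp_mult p (p - 1)))"
proof -
  let ?M = "sdp_mult p (p - 1)" and ?NC = "noncommuting_pairs (sdp_carrier p) (sdp_mult p (p - 1))"
  define A where "A = (SIGMA a : {..<p} \<times> {1}. sdp_carrier p - {(0, 0), a})"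
  define B where "B = ({1..<p} \<times> {0::nat}) \<times> ({..<p} \<times> {1::nat})"
  have "A \<subseteq> ?NC"
  proof
    fix z assume "z \<in> A"
    then obtain i k l where z: "z = ((i, 1), (k, l))" "i < p" "k < p" "l = 0 \<or> l = 1"
      and "(k, l) \<noteq> (0, 0)" "(k, l) \<noteq> (i, 1)"
      by (auto simp: A_def sdp_carrier_def)
    then have "?M (i, 1) (k, l) \<noteq> ?M (k, l) (i, 1)"
      using dihedral_rotation_reflection_noncommute[OF prime p, of k i]
        dihedral_reflections_noncommute[OF prime p, of i k] by auto
    with z show "z \<in> ?NC"
      by (auto simp: noncommuting_pairs_def sdp_carrier_def)
  qed
  moreover have "B \<subseteq> ?NC"
    using dihedral_rotation_reflection_noncommute[OF prime p]
    by (auto simp: B_def noncommuting_pairs_def sdp_carrier_def)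
  moreover have "finite ?NC"
    by (rule finite_subset[of _ "sdp_carrier p \<times> sdp_carrier p"]) (auto simp: noncommuting_pairs_def sdp_carrier_def)
  ultimately have "card (A \<union> B) \<le> card ?NC"
    by (intro card_mono) auto
  moreover have "card A = p * (2 * p - 2)"
  proof -
    have "card (sdp_carrier p - {(0, 0), a}) = 2 * p - 2" if "a \<in> {..<p} \<times> {1}" for a
      using that p by (subst card_Diff_subset) (auto simp: card_sdp_carrier sdp_carrier_def)
    then show ?thesis
      by (simp add: A_def card_SigmaI card_cartesian_product sdp_carrier_def)
  qed
  moreover have "card B = (p - 1) * p"
    by (simp add: B_def card_cartesian_product)
  moreover have "A \<inter> B = {}" "finite A" "finite B"
    by (auto simp: A_def B_def sdp_carrier_def)
  ultimately show ?thesis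
    by (simp add: card_Un_disjoint algebra_simps diff_mult_distrib2)
qed

context group
begin

lemma pow_mod_ord:
  assumes "x \<in> carrier G"
  shows "x [^] (n::nat) = x [^] (n mod ord x)"
proof -
  have "x [^] n = x [^] (ord x * (n div ord x) + n mod ord x)"
    by simp
  also have "\<dots> = (x [^] ord x) [^] (n div ord x) \<otimes> x [^] (n mod ord x)"
    using assms by (simp only: nat_pow_mult nat_pow_pow nat_pow_closed)
  also have "\<dots> = x [^] (n mod ord x)"
    using assms by simp
  finally show ?thesis .
qed

lemma exists_ord_eq_prime:
  assumes "finite (carrier G)" "Factorial_Ring.prime q" "q dvd order G"
  obtains x where "x \<in> carrier G" "ord x = q"
proof -
  obtain m where "order G = q ^ 1 * m"
    using assms(3) by auto
  then obtain H where H: "subgroup H G" "card H = q"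
    using sylow_thm[of q G 1 m] assms(1,2) is_group by auto
  interpret H: group "G\<lparr>carrier := H\<rparr>"
    using subgroup.subgroup_is_group[OF H(1) is_group] .
  have "\<one> \<in> H" "H \<noteq> {\<one>}"
    using subgroup.one_closed[OF H(1)] H(2) prime_gt_1_nat[OF assms(2)] by auto
  then obtain x where x: "x \<in> H" "x \<noteq> \<one>"
    by blast
  then have x_carrier: "x \<in> carrier G"
    using subgroup.subset[OF H(1)] by blast
  have "x [^] q = \<one>"
    using H.pow_order_eq_1[of x] x H(2) by (simp add: order_def flip: nat_pow_consistent)
  then have "ord x dvd q"
    using pow_eq_id[OF x_carrier] by simp
  moreover have "ord x \<noteq> 1"
    using ord_eq_1[OF x_carrier] x(2) by simp
  ultimately have "ord x = q"
    using assms(2) unfolding prime_nat_iff by blast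
  with x_carrier show thesis
    by (rule that)
qed

end

locale order_2p_group = group +
  fixes p r s
  assumes finite_carrier: "finite (carrier G)" and order_eq: "order G = 2 * p"
    and prime_p: "Factorial_Ring.prime p" and p_gt_2: "2 < p"
    and r: "r \<in> carrier G" "ord r = p"
    and s: "s \<in> carrier G" "ord s = 2"
begin

lemma r_pow_p: "r [^] p = \<one>"
  using pow_ord_eq_1[OF r(1)] r(2) by simp

lemma s_mult_s: "s \<otimes> s = \<one>"
  using pow_ord_eq_1[OF s(1)] s by (simp add: numeral_2_eq_2)

lemma r_pow_inj: "i < p \<Longrightarrow> k < p \<Longrightarrow> r [^] i = r [^] k \<Longrightarrow> i = k"
  using ord_inj[OF r(1)] r(2) unfolding inj_on_def by force

lemma inv_r_pow: "inv (r [^] (n::nat)) = r [^] ((p - 1) * n)"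
proof (rule inv_equality)
  have "(p - 1) * n + n = p * n"
    using p_gt_2 by (simp add: algebra_simps)
  then have "r [^] ((p - 1) * n) \<otimes> r [^] n = (r [^] p) [^] n"
    using r(1) by (simp add: nat_pow_mult nat_pow_pow)
  then show "r [^] ((p - 1) * n) \<otimes> r [^] n = \<one>"
    by (simp add: r_pow_p)
qed (use r(1) in simp_all)

lemma s_neq_r_pow: "s \<noteq> r [^] (n::nat)"
proof
  assume "s = r [^] n"
  then have "s [^] p = (r [^] p) [^] n"
    using r(1) by (simp add: nat_pow_pow mult.commute)
  then have "ord s dvd p"
    using pow_eq_id[OF s(1)] r_pow_p by simp
  then show False
    using s(2) prime_odd_nat[OF prime_p] p_gt_2 by simp
qed

lemma r_pow_mult_s_neq_r_pow: "r [^] (m::nat) \<otimes> s \<noteq> r [^] (n::nat)"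
proof
  assume "r [^] m \<otimes> s = r [^] n"
  have "s = inv (r [^] m) \<otimes> (r [^] m \<otimes> s)"
    using r(1) s(1) by (simp add: m_assoc[symmetric])
  also have "\<dots> = r [^] ((p - 1) * m + n)"
    using r(1) \<open>r [^] m \<otimes> s = r [^] n\<close> by (simp add: inv_r_pow nat_pow_mult)
  finally show False
    using s_neq_r_pow by blast
qed

definition word :: "nat \<times> nat \<Rightarrow> 'a" where
  "word a = r [^] fst a \<otimes> s [^] snd a"

lemma word_closed: "word a \<in> carrier G"
  using r(1) s(1) by (simp add: word_def)

lemma word_inj: "inj_on word (sdp_carrier p)"
proof (rule inj_onI)
  fix a b assume "a \<in> sdp_carrier p" "b \<in> sdp_carrier p" "word a = word b"
  then obtain i j k l where ab: "a = (i, j)" "b = (k, l)" "i < p" "k < p" "j = 0 \<or> j = 1" "l = 0 \<or> l = 1"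
    and eq: "r [^] i \<otimes> s [^] j = r [^] k \<otimes> s [^] l"
    by (cases a, cases b) (auto simp: sdp_carrier_def word_def)
  consider "j = l" | "j = 0" "l = 1" | "j = 1" "l = 0"
    using ab by auto
  then show "a = b"
  proof cases
    case 1
    then have "r [^] i = r [^] k"
      using eq r(1) s(1) by simp
    then show ?thesis
      using r_pow_inj ab 1 by simp
  next
    case 2
    then show ?thesis
      using eq r(1) s(1) r_pow_mult_s_neq_r_pow[of k i] by simp
  next
    case 3
    then show ?thesis
      using eq r(1) s(1) r_pow_mult_s_neq_r_pow[of i k] by simp
  qed
qed

lemma word_image: "word ` sdp_carrier p = carrier G"
proof (rule card_subset_eq[OF finite_carrier])
  show "word ` sdp_carrier p \<subseteq> carrier G"
    using word_closed by blast
  show "card (word ` sdp_carrier p) = card (carrier G)"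
    using card_image[OF word_inj] order_eq by (simp add: card_sdp_carrier order_def)
qed

lemma conj_r_eq_r_pow:
  obtains k where "k < p" "s \<otimes> r \<otimes> s = r [^] k"
proof -
  have "s \<otimes> r \<otimes> s \<in> word ` sdp_carrier p"
    using word_image r(1) s(1) by simp
  then obtain i j where ij: "i < p" "j = 0 \<or> j = 1" "s \<otimes> r \<otimes> s = word (i, j)"
    by (auto simp: sdp_carrier_def)
  have "j \<noteq> 1"
  proof
    assume "j = 1"
    then have "s \<otimes> r \<otimes> s = r [^] i \<otimes> s"
      using ij(3) s(1) by (simp add: word_def)
    then have "s \<otimes> r = r [^] i"
      using r(1) s(1) by simp
    then have "s = r [^] i \<otimes> inv r"
      using r(1) s(1) by (metis inv_solve_right m_closed nat_pow_closed)
    also have "\<dots> = r [^] (i + (p - 1))"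
      using inv_r_pow[of 1] r(1) by (simp add: nat_pow_mult)
    finally show False
      using s_neq_r_pow by blast
  qed
  then show thesis
    using that ij r(1) by (auto simp: word_def)
qed

lemma conj_r_pow:
  assumes "s \<otimes> r \<otimes> s = r [^] k"
  shows "s \<otimes> r [^] (n::nat) \<otimes> s = r [^] (k * n)"
proof (induction n)
  case 0
  then show ?case
    using s(1) s_mult_s by simp
next
  case (Suc n)
  have "s \<otimes> r [^] Suc n \<otimes> s = (s \<otimes> r [^] n \<otimes> s) \<otimes> (s \<otimes> r \<otimes> s)"
    using r(1) s(1) s_mult_s by (simp add: m_assoc flip: m_assoc[of s s])
  also have "\<dots> = r [^] (k * Suc n)"
    using Suc assms r(1) by (simp add: nat_pow_mult add.commute)
  finally show ?case .
qed

lemma conj_exponent_cases: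
  assumes k: "k < p" "s \<otimes> r \<otimes> s = r [^] k"
  shows "k = 1 \<or> k = p - 1"
proof -
  have "r [^] (1::nat) = s \<otimes> (s \<otimes> r \<otimes> s) \<otimes> s"
    using r(1) s(1) s_mult_s by (simp add: m_assoc flip: m_assoc[of s s])
  also have "\<dots> = r [^] ((k * k) mod p)"
    using conj_r_pow[OF k(2), of k] k(2) pow_mod_ord[OF r(1)] r(2) by (simp add: m_assoc)
  finally have "(k * k) mod p = 1"
    using r_pow_inj[of 1 "(k * k) mod p"] p_gt_2 by simp
  then show ?thesis
    using square_eq_one_mod_prime[OF prime_p k(1)] by simp
qed

lemma s_pow_mult_r_pow:
  assumes "s \<otimes> r \<otimes> s = r [^] k" and "j = 0 \<or> j = 1"
  shows "s [^] j \<otimes> r [^] (m::nat) = r [^] (if j = 0 then m else k * m) \<otimes> s [^] (j::nat)"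
  using assms(2)
proof
  assume "j = 1"
  have "s \<otimes> r [^] m = s \<otimes> r [^] m \<otimes> (s \<otimes> s)"
    using r(1) s(1) s_mult_s by simp
  also have "\<dots> = r [^] (k * m) \<otimes> s"
    using conj_r_pow[OF assms(1)] r(1) s(1) by (simp flip: m_assoc)
  finally show ?thesis
    using \<open>j = 1\<close> s(1) by simp
qed (use r(1) s(1) in simp)

lemma word_mult:
  assumes k: "s \<otimes> r \<otimes> s = r [^] k" and "a \<in> sdp_carrier p" "b \<in> sdp_carrier p"
  shows "word (sdp_mult p k a b) = word a \<otimes> word b"
proof -
  obtain i j m l where ab: "a = (i, j)" "b = (m, l)" "j = 0 \<or> j = 1"
    using assms(2,3) by (cases a, cases b) (auto simp: sdp_carrier_def)
  define c where "c = (if j = 0 then m else k * m)"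
  have "word a \<otimes> word b = r [^] i \<otimes> (s [^] j \<otimes> r [^] m) \<otimes> s [^] l"
    using ab r(1) s(1) by (simp add: word_def m_assoc)
  also have "\<dots> = (r [^] i \<otimes> r [^] c) \<otimes> (s [^] j \<otimes> s [^] l)"
    using s_pow_mult_r_pow[OF k ab(3)] r(1) s(1) by (simp add: c_def m_assoc)
  also have "\<dots> = r [^] ((i + c) mod p) \<otimes> s [^] ((j + l) mod 2)"
    using pow_mod_ord[OF r(1), of "i + c"] pow_mod_ord[OF s(1), of "j + l"] r s
    by (simp add: nat_pow_mult)
  also have "\<dots> = word (sdp_mult p k a b)"
    using ab by (simp add: word_def c_def)
  finally show ?thesis ..
qed

lemma iso_sdp: "\<exists>e\<in>{1, p - 1}. grp (sdp_carrier p) (sdp_mult p e) \<cong> G"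
proof -
  obtain k where k: "k < p" "s \<otimes> r \<otimes> s = r [^] k"
    using conj_r_eq_r_pow by blast
  have "word \<in> iso (grp (sdp_carrier p) (sdp_mult p k)) G"
    using word_inj word_image word_closed word_mult[OF k(2)]
    by (auto simp: iso_def hom_def bij_betw_def)
  then show ?thesis
    using conj_exponent_cases[OF k] is_isoI by blast
qed

end

lemma (in group) order_2p_iso_sdp:
  assumes "finite (carrier G)" "order G = 2 * p" "Factorial_Ring.prime p" "2 < p"
  shows "\<exists>e\<in>{1, p - 1}. grp (sdp_carrier p) (sdp_mult p e) \<cong> G"
proof -
  obtain r where "r \<in> carrier G" "ord r = p"
    using exists_ord_eq_prime[OF assms(1,3)] assms(2) by auto
  moreover obtain s where "s \<in> carrier G" "ord s = 2"
    using exists_ord_eq_prime[OF assms(1) two_is_prime_nat] assms(2) by auto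
  ultimately interpret order_2p_group G p r s
    using assms by unfold_locales
  show ?thesis
    by (rule iso_sdp)
qed

lemma card_pairs_with_product_in_le:
  assumes "finite G" "finite T" and inj: "\<And>x. x \<in> G \<Longrightarrow> inj_on (f x) G"
  shows "card {(x, y). x \<in> G \<and> y \<in> G \<and> f x y \<in> T} \<le> card G * card T"
proof -
  have "{(x, y). x \<in> G \<and> y \<in> G \<and> f x y \<in> T} = (SIGMA x:G. {y \<in> G. f x y \<in> T})"
    by auto
  moreover have "card {y \<in> G. f x y \<in> T} \<le> card T" if "x \<in> G" for x
    using card_inj_on_le[of "f x" "{y \<in> G. f x y \<in> T}" T] inj[OF that] assms(2)
    by (auto intro: inj_on_subset)
  ultimately show ?thesis
    using assms(1) sum_bounded_above[of G "\<lambda>x. card {y \<in> G. f x y \<in> T}" "card T"] by simp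
qed

lemma op_dist_conjugate_le:
  assumes "finite G" "T \<subseteq> G"
    and closed: "\<And>x y. x \<in> G \<Longrightarrow> y \<in> G \<Longrightarrow> f x y \<in> G"
    and inj: "\<And>x. x \<in> G \<Longrightarrow> inj_on (f x) G"
    and fixed: "\<And>x. x \<in> G - T \<Longrightarrow> \<sigma> x = x"
    and conj: "\<And>x y. x \<in> G \<Longrightarrow> y \<in> G \<Longrightarrow> g x y = \<sigma> (f (\<sigma> x) (\<sigma> y))"
  shows "op_dist G f g \<le> 3 * card G * card T"
proof -
  let ?D = "{(x, y). x \<in> G \<and> y \<in> G \<and> f x y \<noteq> g x y}"
    and ?P = "{(x, y). x \<in> G \<and> y \<in> G \<and> f x y \<in> T}"
  have finite: "finite T" "finite ?P"
    using assms(1,2) by (auto intro: finite_subset[of _ "G \<times> G"] finite_subset[of _ G])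
  have "?D \<subseteq> (T \<times> G) \<union> (G \<times> T) \<union> ?P"
  proof
    fix z assume "z \<in> ?D"
    then obtain x y where z: "z = (x, y)" "x \<in> G" "y \<in> G" "f x y \<noteq> g x y"
      by blast
    show "z \<in> (T \<times> G) \<union> (G \<times> T) \<union> ?P"
    proof (cases "x \<in> T \<or> y \<in> T")
      case False
      then have "g x y = \<sigma> (f x y)"
        using conj fixed z by simp
      then have "f x y \<in> T"
        using fixed closed z by force
      then show ?thesis
        using z by simp
    qed (use z in auto)
  qed
  then have "card ?D \<le> card ((T \<times> G) \<union> (G \<times> T) \<union> ?P)"
    using assms(1) finite by (intro card_mono) auto
  also have "\<dots> \<le> card (T \<times> G) + card (G \<times> T) + card ?P"
    by (meson add_le_mono card_Un_le order_trans order_refl)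
  also have "\<dots> \<le> 3 * card G * card T"
    using card_pairs_with_product_in_le[OF assms(1) finite(1) inj] by (simp add: card_cartesian_product)
  finally show ?thesis
    by (simp add: op_dist_def)
qed

lemma exists_distinct_iso_group_op_dist_le:
  assumes "group_op G f" "finite G" "2 \<le> card G"
  shows "\<exists>g. group_op G g \<and> grp G g \<cong> grp G f \<and> 0 < op_dist G f g \<and> op_dist G f g \<le> 6 * card G"
proof -
  interpret F: group "grp G f"
    using assms(1) by (simp add: group_op_def)
  define e where "e = one (grp G f)"
  have e: "e \<in> G" "\<And>x. x \<in> G \<Longrightarrow> f e x = x \<and> f x e = x"
    using F.one_closed F.l_one F.r_one by (simp_all add: e_def)
  obtain b where b: "b \<in> G" "b \<noteq> e"
    using card_mono[of "{e}" G] assms(2,3) by force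
  define \<sigma> where "\<sigma> x = (if x = e then b else if x = b then e else x)" for x
  have \<sigma>: "\<sigma> (\<sigma> x) = x" "x \<in> G \<Longrightarrow> \<sigma> x \<in> G" for x
    using b e by (auto simp: \<sigma>_def)
  define g where "g = transfer_op \<sigma> G f"
  have conj: "g x y = \<sigma> (f (\<sigma> x) (\<sigma> y))" if "x \<in> G" "y \<in> G" for x y
    using transfer_op_involution(2)[OF \<sigma> that] by (simp add: g_def)
  have iso: "\<sigma> \<in> iso (grp G f) (grp G g)"
    unfolding g_def
    by (rule iso_transfer_op) (use transfer_op_involution(1)[OF \<sigma>] grp_closed[OF F.is_group] in auto)
  have "f b b \<noteq> b"
    using F.l_cancel[of b b e] b e by auto
  moreover have "g b b = b"
    using conj[OF b(1) b(1)] e by (simp add: \<sigma>_def)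
  ultimately have "0 < op_dist G f g"
    using op_dist_gt_0I[OF assms(2) b(1) b(1)] by simp
  moreover have "op_dist G f g \<le> 3 * card G * card {e, b}"
  proof (rule op_dist_conjugate_le)
    show "{e, b} \<subseteq> G"
      using b e by simp
    show "f x y \<in> G" if "x \<in> G" "y \<in> G" for x y
      using grp_closed[OF F.is_group] that .
    show "inj_on (f x) G" if "x \<in> G" for x
      using F.l_cancel that by (simp add: inj_on_def)
    show "\<sigma> x = x" if "x \<in> G - {e, b}" for x
      using that by (simp add: \<sigma>_def)
  qed (use assms(2) conj in simp_all)
  moreover have "group_op G g"
    using group_grp_iso_transfer[OF F.is_group iso] by (simp add: group_op_def)
  moreover have "grp G g \<cong> grp G f"
    using F.iso_sym[OF is_isoI[OF iso]] .
  ultimately show ?thesis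
    using b(2) by auto
qed

lemma group_sdp_order_2p:
  assumes "2 < p" "e \<in> {1, p - 1}"
  shows "group (grp (sdp_carrier p) (sdp_mult p e))"
  using assms by (intro group_sdp square_mod_eq_one) auto

lemma group_op_order_2p_iso_sdp:
  assumes "Factorial_Ring.prime p" "2 < p" "finite G" "card G = 2 * p" "group_op G f"
  obtains e where "e \<in> {1, p - 1}" "grp (sdp_carrier p) (sdp_mult p e) \<cong> grp G f"
  using group.order_2p_iso_sdp[of "grp G f" p] assms by (auto simp: group_op_def order_def)

lemma op_dist_noniso_order_2p_ge:
  assumes prime: "Factorial_Ring.prime p" and p: "2 < p" and G: "finite G" "card G = 2 * p"
    and "group_op G f" "group_op G g" and noniso: "\<not> grp G g \<cong> grp G f"
  shows "3 * p * (p - 1) \<le> 2 * op_dist G f g"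
proof -
  obtain ef where ef: "ef \<in> {1, p - 1}" "grp (sdp_carrier p) (sdp_mult p ef) \<cong> grp G f"
    using group_op_order_2p_iso_sdp[OF prime p G \<open>group_op G f\<close>] .
  obtain eg where eg: "eg \<in> {1, p - 1}" "grp (sdp_carrier p) (sdp_mult p eg) \<cong> grp G g"
    using group_op_order_2p_iso_sdp[OF prime p G \<open>group_op G g\<close>] .
  have "ef \<noteq> eg"
  proof
    assume "ef = eg"
    then have "grp G g \<cong> grp G f"
      using iso_trans[OF group.iso_sym[OF group_sdp_order_2p[OF p eg(1)] eg(2)]] ef(2) by simp
    with noniso show False ..
  qed
  have NC_f: "card (noncommuting_pairs G f) = card (noncommuting_pairs (sdp_carrier p) (sdp_mult p ef))"
    by (rule card_noncommuting_pairs_iso[OF group_sdp_order_2p[OF p ef(1)] ef(2)])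
  have NC_g: "card (noncommuting_pairs G g) = card (noncommuting_pairs (sdp_carrier p) (sdp_mult p eg))"
    by (rule card_noncommuting_pairs_iso[OF group_sdp_order_2p[OF p eg(1)] eg(2)])
  consider "ef = 1" "eg = p - 1" | "ef = p - 1" "eg = 1"
    using ef(1) eg(1) \<open>ef \<noteq> eg\<close> by auto
  then show ?thesis
  proof cases
    case 1
    then show ?thesis
      using NC_f NC_g noncommuting_pairs_sdp_one card_noncommuting_pairs_dihedral[OF prime p]
        card_noncommuting_pairs_le[OF G(1), of g f] by simp
  next
    case 2
    then show ?thesis
      using NC_f NC_g noncommuting_pairs_sdp_one card_noncommuting_pairs_dihedral[OF prime p]
        card_noncommuting_pairs_le[OF G(1), of f g] op_dist_commute[of G g f] by simp
  qed
qed

lemma exists_noniso_group_op_order_2p: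
  assumes prime: "Factorial_Ring.prime p" and p: "2 < p" and G: "finite G" "card G = 2 * p"
    and "group_op G f"
  shows "\<exists>g. group_op G g \<and> \<not> grp G g \<cong> grp G f"
proof -
  obtain ef where ef: "ef \<in> {1, p - 1}" "grp (sdp_carrier p) (sdp_mult p ef) \<cong> grp G f"
    using group_op_order_2p_iso_sdp[OF prime p G \<open>group_op G f\<close>] .
  then obtain \<psi> where "\<psi> \<in> iso (grp (sdp_carrier p) (sdp_mult p ef)) (grp G f)"
    by (auto simp: is_iso_def)
  then have bij: "bij_betw \<psi> (sdp_carrier p) G"
    by (simp add: iso_def)
  define e where "e = (if ef = 1 then p - 1 else 1)"
  define g where "g = transfer_op \<psi> (sdp_carrier p) (sdp_mult p e)"
  have e: "e \<in> {1, p - 1}" "e \<noteq> ef"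
    using ef(1) p by (auto simp: e_def)
  have iso: "\<psi> \<in> iso (grp (sdp_carrier p) (sdp_mult p e)) (grp G g)"
    unfolding g_def by (rule iso_transfer_op[OF bij sdp_mult_closed]) (use p in simp_all)
  have "\<not> grp G g \<cong> grp G f"
  proof
    assume "grp G g \<cong> grp G f"
    then have "grp (sdp_carrier p) (sdp_mult p ef) \<cong> grp (sdp_carrier p) (sdp_mult p e)"
      using iso_trans[OF ef(2) group.iso_sym[OF group_grp_iso_transfer[OF group_sdp_order_2p[OF p e(1)] iso]]]
        group.iso_sym[OF group_sdp_order_2p[OF p e(1)] is_isoI[OF iso]] iso_trans by blast
    then have "card (noncommuting_pairs (sdp_carrier p) (sdp_mult p e))
        = card (noncommuting_pairs (sdp_carrier p) (sdp_mult p ef))"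
      by (rule card_noncommuting_pairs_iso[OF group_sdp_order_2p[OF p ef(1)]])
    moreover have "ef = 1 \<and> e = p - 1 \<or> ef = p - 1 \<and> e = 1"
      using ef(1) e by auto
    ultimately show False
      using noncommuting_pairs_sdp_one card_noncommuting_pairs_dihedral[OF prime p] p
      by (auto simp del: sdp_mult.simps)
  qed
  moreover have "group_op G g"
    using group_grp_iso_transfer[OF group_sdp_order_2p[OF p e(1)] iso] by (simp add: group_op_def)
  ultimately show ?thesis
    by blast
qed

lemma finite_op_dist_set:
  assumes "finite G"
  shows "finite {op_dist G f g | g. P g}"
  by (rule finite_subset[of _ "{..card (G \<times> G)}"])
    (auto simp: op_dist_def intro!: card_mono assms)

theorem lemma4p12:
  fixes G :: "'a set" and f :: "'a \<Rightarrow> 'a \<Rightarrow> 'a" and p :: nat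
  assumes "Factorial_Ring.prime p" and "p \<ge> 11"
    and "finite G" and "card G = 2 * p"
    and "group_op G f"
  shows "delta_iso G f < delta_noniso G f"
proof -
  have p: "2 < p"
    using assms(2) by simp
  obtain g where "group_op G g" "grp G g \<cong> grp G f" "0 < op_dist G f g" "op_dist G f g \<le> 12 * p"
    using exists_distinct_iso_group_op_dist_le[OF assms(5,3)] assms(4) p by auto
  then have iso_bound: "delta_iso G f \<le> 12 * p"
    unfolding delta_iso_def by (subst Min_le_iff) (auto intro: finite_op_dist_set[OF assms(3)])
  let ?S = "{op_dist G f h | h. group_op G h \<and> \<not> grp G h \<cong> grp G f}"
  have "?S \<noteq> {}"
    using exists_noniso_group_op_order_2p[OF assms(1) p assms(3,4,5)] by blast
  then have "delta_noniso G f \<in> ?S"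
    unfolding delta_noniso_def by (rule Min_in[OF finite_op_dist_set[OF assms(3)]])
  then have "3 * p * (p - 1) \<le> 2 * delta_noniso G f"
    using op_dist_noniso_order_2p_ge[OF assms(1) p assms(3,4,5)] by auto
  moreover have "3 * p * 10 \<le> 3 * p * (p - 1)"
    using assms(2) by simp
  ultimately show ?thesis
    using iso_bound assms(2) by linarith
qed

end
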